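(* For every integer $n\ge0$, with the operator acting on the variable $a$, \[ E(y/x,x;\theta)\{(-1)^nq^{\binom n2}a^n\}=U_n(x,y,a;q). \]
   Context: $q$ is a fixed complex number with $0<|q|<1$; $(a;q)_n=\prod_{i=0}^{n-1}(1-aq^i)$; ${n\brack k}=\frac{(q;q)_n}{(q;q)_k(q;q)_{n-k}}$. $P_n(x,y)=\prod_{i=0}^{n-1}(x-q^iy)$, $U_n(x,y,a;q)=\sum_{k=0}^n{n\brack k}(-1)^kq^{\binom k2}a^kP_{n-k}(x,y)$. For functions of $a$: $D_q\{f(a)\}=\frac{f(a)-f(aq)}{a}$, $\eta^{-1}\{f(a)\}=f(aq^{-1})$, $\theta=\eta^{-1}D_q$ (so $\theta\{f(a)\}=\frac{f(aq^{-1})-f(a)}{aq^{-1}}$), and the Cauchy companion operator is $E(\alpha,\beta;\theta)=\sum_{n=0}^\infty\frac{(\alpha;q)_n(-\beta\theta)^n}{(q;q)_n}$ (with $\theta^0$ the identity). *)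

theory Defs
  imports Complex_Main
begin

definition qpoch :: "complex \<Rightarrow> complex \<Rightarrow> nat \<Rightarrow> complex" where
  "qpoch a q n = (\<Prod>i<n. (1 - a * q ^ i))"

definition qbinom :: "complex \<Rightarrow> nat \<Rightarrow> nat \<Rightarrow> complex" where
  "qbinom q n k = qpoch q q n / (qpoch q q k * qpoch q q (n - k))"

definition Pn :: "complex \<Rightarrow> nat \<Rightarrow> complex \<Rightarrow> complex \<Rightarrow> complex" where
  "Pn q n x y = (\<Prod>i<n. (x - q ^ i * y))"

definition Uq :: "complex \<Rightarrow> nat \<Rightarrow> complex \<Rightarrow> complex \<Rightarrow> complex \<Rightarrow> complex" where
  "Uq q n x y a = (\<Sum>k=0..n. qbinom q n k * (-1) ^ k * q ^ (k choose 2) * a ^ k * Pn q (n - k) x y)"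

definition theta :: "complex \<Rightarrow> (complex \<Rightarrow> complex) \<Rightarrow> complex \<Rightarrow> complex" where
  "theta q f a = (f (a / q) - f a) / (a / q)"

text \<open>The summands of E(alpha,beta;theta){f}(a):
  (alpha;q)_m (-beta)^m / (q;q)_m * (theta^m f)(a).\<close>
definition E_term :: "complex \<Rightarrow> complex \<Rightarrow> complex \<Rightarrow> (complex \<Rightarrow> complex) \<Rightarrow> complex \<Rightarrow> nat \<Rightarrow> complex" where
  "E_term q \<alpha> \<beta> f a m = qpoch \<alpha> q m * (- \<beta>) ^ m / qpoch q q m * ((theta q ^^ m) f) a"

end

theory Submission
  imports Defs
begin

text \<open>On monomials \<open>\<theta>\<close> acts as a scaled derivative,
  \<open>\<theta>{b^k} = (1 - q^k) / q^(k-1) * b^(k-1)\<close>, so \<open>m \<le> n\<close> iterations send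
  \<open>a^n\<close> to \<open>(q;q)_n / (q;q)_(n-m) * q^(binom(n-m,2) - binom(n,2)) * a^(n-m)\<close>, and the
  \<open>(n+1)\<close>-st iteration gives \<open>0\<close>. Hence the operator series is a finite sum, and
  with \<open>(y/x;q)_m x^m = P_m(x,y)\<close> its \<open>m\<close>-th term is the \<open>k = n - m\<close> term of
  \<open>U_n(x,y,a;q)\<close>.\<close>

lemma qpoch_Suc: "qpoch a q (Suc m) = qpoch a q m * (1 - a * q ^ m)"
  unfolding qpoch_def by simp

lemma qpoch_self_nonzero:
  assumes "cmod q < 1"
  shows "qpoch q q k \<noteq> 0"
proof -
  have "q ^ Suc i \<noteq> 1" for i
  proof
    assume "q ^ Suc i = 1"
    hence "cmod q ^ Suc i = 1" by (metis norm_one norm_power)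
    moreover have "cmod q ^ Suc i < 1"
      using power_strict_mono[OF assms, of "Suc i"] by simp
    ultimately show False by simp
  qed
  thus ?thesis unfolding qpoch_def by (auto simp: prod_zero_iff)
qed

lemma Pn_eq_qpoch:
  assumes "x \<noteq> 0"
  shows "Pn q m x y = x ^ m * qpoch (y / x) q m"
  unfolding qpoch_def Pn_def
  by (induction m) (use assms in \<open>auto simp: field_simps\<close>)

lemma theta_cong_nonzero:
  assumes "q \<noteq> 0" "b \<noteq> 0" "\<And>b. b \<noteq> 0 \<Longrightarrow> f b = g b"
  shows "theta q f b = theta q g b"
  using assms by (simp add: theta_def)

lemma theta_monomial:
  assumes "q \<noteq> 0" "b \<noteq> 0"
  shows "theta q (\<lambda>b. c * b ^ k) b = c * ((1 - q ^ k) / q ^ (k - 1)) * b ^ (k - 1)"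
proof (cases k)
  case 0
  then show ?thesis by (simp add: theta_def)
next
  case (Suc j)
  then show ?thesis
    using assms by (simp add: theta_def field_simps power_divide)
qed

lemma funpow_theta_monomial:
  assumes "q \<noteq> 0" "b \<noteq> 0"
  shows "(theta q ^^ m) (\<lambda>b. c * b ^ n) b
           = c * (\<Prod>j<m. (1 - q ^ (n - j)) / q ^ (n - 1 - j)) * b ^ (n - m)"
  using assms(2)
proof (induction m arbitrary: b)
  case 0
  then show ?case by simp
next
  case (Suc m)
  define C where "C = c * (\<Prod>j<m. (1 - q ^ (n - j)) / q ^ (n - 1 - j))"
  have "(theta q ^^ Suc m) (\<lambda>b. c * b ^ n) b = theta q ((theta q ^^ m) (\<lambda>b. c * b ^ n)) b"
    by simp
  also have "\<dots> = theta q (\<lambda>b. C * b ^ (n - m)) b"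
    by (rule theta_cong_nonzero[OF assms(1) Suc.prems]) (simp add: Suc.IH C_def)
  also have "\<dots> = C * ((1 - q ^ (n - m)) / q ^ (n - m - 1)) * b ^ (n - m - 1)"
    by (rule theta_monomial[OF assms(1) Suc.prems])
  also have "\<dots> = c * (\<Prod>j<Suc m. (1 - q ^ (n - j)) / q ^ (n - 1 - j)) * b ^ (n - Suc m)"
    by (simp add: C_def mult_ac)
  finally show ?case .
qed

text \<open>For \<open>m > n\<close> the product contains the factor \<open>1 - q\<^sup>0 = 0\<close>.\<close>

lemma funpow_theta_monomial_eq_0:
  assumes "q \<noteq> 0" "b \<noteq> 0" "n < m"
  shows "(theta q ^^ m) (\<lambda>b. c * b ^ n) b = 0"
proof -
  have "(\<Prod>j<m. (1 - q ^ (n - j)) / q ^ (n - 1 - j)) = 0"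
    using assms(3) by (intro prod_zero bexI[of _ n]) auto
  then show ?thesis by (simp add: funpow_theta_monomial[OF assms(1,2)])
qed

lemma prod_one_minus_power_mult_qpoch:
  "(\<Prod>j<m. 1 - q ^ (k + m - j)) * qpoch q q k = qpoch q q (k + m)"
proof (induction m)
  case 0
  then show ?case by simp
next
  case (Suc m)
  have "(\<Prod>j<Suc m. 1 - q ^ (k + Suc m - j)) = (1 - q ^ Suc (k + m)) * (\<Prod>j<m. 1 - q ^ (k + m - j))"
    by (subst prod.lessThan_Suc_shift) simp
  hence "(\<Prod>j<Suc m. 1 - q ^ (k + Suc m - j)) * qpoch q q k
      = (1 - q ^ Suc (k + m)) * ((\<Prod>j<m. 1 - q ^ (k + m - j)) * qpoch q q k)"
    by (simp only: mult.assoc)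
  also have "\<dots> = qpoch q q (k + Suc m)"
    by (simp only: Suc.IH) (simp add: qpoch_Suc mult.commute)
  finally show ?case .
qed

lemma prod_power_mult_power_choose_two:
  "(\<Prod>j<m. (q::'a::comm_monoid_mult) ^ (k + m - 1 - j)) * q ^ (k choose 2)
     = q ^ ((k + m) choose 2)"
proof (induction m)
  case 0
  then show ?case by simp
next
  case (Suc m)
  have "(\<Prod>j<Suc m. q ^ (k + Suc m - 1 - j)) * q ^ (k choose 2)
      = q ^ (k + m) * ((\<Prod>j<m. q ^ (k + m - 1 - j)) * q ^ (k choose 2))"
    by (subst prod.lessThan_Suc_shift) (simp add: mult_ac)
  also have "\<dots> = q ^ (k + m + ((k + m) choose 2))"
    by (simp only: Suc.IH power_add)
  also have "\<dots> = q ^ ((k + Suc m) choose 2)"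
    by (simp add: numeral_2_eq_2)
  finally show ?case .
qed

lemma E_term_monomial:
  assumes "cmod q < 1" "q \<noteq> 0" "x \<noteq> 0" "a \<noteq> 0" "k \<le> n"
  shows "E_term q (y / x) x (\<lambda>b. (-1) ^ n * q ^ (n choose 2) * b ^ n) a (n - k)
           = qbinom q n k * (-1) ^ k * q ^ (k choose 2) * a ^ k * Pn q (n - k) x y"
proof -
  obtain m where n: "n = k + m" using assms(5) le_Suc_ex by blast
  have qk: "qpoch q q k \<noteq> 0"
    using qpoch_self_nonzero[OF assms(1)] .
  have "(\<Prod>j<m. 1 - q ^ (n - j)) = qpoch q q n / qpoch q q k"
    using prod_one_minus_power_mult_qpoch[where m = m and k = k] qk by (simp add: n field_simps)
  moreover have "(\<Prod>j<m. q ^ (n - 1 - j)) = q ^ (n choose 2) / q ^ (k choose 2)"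
    using prod_power_mult_power_choose_two[where m = m and k = k] assms(2) by (simp add: n field_simps)
  ultimately have "(theta q ^^ m) (\<lambda>b. (-1) ^ n * q ^ (n choose 2) * b ^ n) a
          = (-1) ^ n * q ^ (k choose 2) * (qpoch q q n / qpoch q q k) * a ^ k"
    using assms(2,4) by (simp add: funpow_theta_monomial prod_dividef n)
  hence "E_term q (y / x) x (\<lambda>b. (-1) ^ n * q ^ (n choose 2) * b ^ n) a (n - k)
      = qpoch (y / x) q m * ((- x) ^ m * (-1) ^ n) * (qpoch q q n / (qpoch q q k * qpoch q q m))
          * q ^ (k choose 2) * a ^ k"
    by (simp add: E_term_def n mult_ac)
  also have "(- x) ^ m * (-1) ^ n = (-1) ^ k * x ^ m"
    by (simp add: n power_add power_minus[of x])
  finally show ?thesis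
    using assms(3) by (simp add: qbinom_def Pn_eq_qpoch n mult_ac)
qed

theorem mainTheorem8:
  fixes q x y a :: complex and n :: nat
  assumes "0 < cmod q" and "cmod q < 1"
    and "x \<noteq> 0" and "a \<noteq> 0"
  shows "(E_term q (y / x) x (\<lambda>b. (-1) ^ n * q ^ (n choose 2) * b ^ n) a)
           sums (Uq q n x y a)"
proof -
  let ?T = "E_term q (y / x) x (\<lambda>b. (-1) ^ n * q ^ (n choose 2) * b ^ n) a"
  have q0: "q \<noteq> 0" using assms(1) by auto
  have "?T m = 0" if "n < m" for m
    by (simp add: E_term_def funpow_theta_monomial_eq_0[OF q0 assms(4) that])
  hence "?T sums (\<Sum>m\<le>n. ?T m)" by (intro sums_finite) auto
  also have "(\<Sum>m\<le>n. ?T m) = (\<Sum>k=0..n. ?T (n - k))"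
    using sum.atLeastAtMost_rev[of ?T 0 n] by (simp add: atLeast0AtMost)
  also have "\<dots> = Uq q n x y a"
    unfolding Uq_def by (intro sum.cong refl) (simp add: E_term_monomial[OF assms(2) q0 assms(3,4)])
  finally show ?thesis .
qed

end
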